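(* Let $X$ be a completely regular (Tychonoff) space and $C(X)$ the ring of real-valued continuous functions on $X$. The following are equivalent: (1) for any two ideals $A,B$ of $C(X)$ with $A\cap B=(0)$, $\mathrm{Ann}(A)+\mathrm{Ann}(B)=C(X)$; (2) $X$ is extremally disconnected.
   Context: $\mathrm{Ann}(A)=\{f\in C(X): fA=0\}$. A space $X$ is extremally disconnected if the closure of every open set is open. *)

theory Defs
  imports "HOL-Analysis.Analysis"
begin

text \<open>Functions are
  normalised to be 0 outside the topological space, so that equality in C(X)
  is equality of HOL functions and the ring operations are pointwise.\<close>
definition CX :: "'a topology \<Rightarrow> ('a \<Rightarrow> real) set" where
  "CX X = {f. continuous_map X euclideanreal f \<and> (\<forall>x. x \<notin> topspace X \<longrightarrow> f x = 0)}"

definition ideal_CX :: "'a topology \<Rightarrow> ('a \<Rightarrow> real) set \<Rightarrow> bool" where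
  "ideal_CX X A \<longleftrightarrow> A \<subseteq> CX X \<and> (\<lambda>x. 0) \<in> A
     \<and> (\<forall>f\<in>A. \<forall>g\<in>A. (\<lambda>x. f x - g x) \<in> A)
     \<and> (\<forall>f\<in>A. \<forall>h\<in>CX X. (\<lambda>x. h x * f x) \<in> A)"

definition Ann :: "'a topology \<Rightarrow> ('a \<Rightarrow> real) set \<Rightarrow> ('a \<Rightarrow> real) set" where
  "Ann X A = {f \<in> CX X. \<forall>g\<in>A. (\<lambda>x. f x * g x) = (\<lambda>x. 0)}"

definition set_plus_CX :: "('a \<Rightarrow> real) set \<Rightarrow> ('a \<Rightarrow> real) set \<Rightarrow> ('a \<Rightarrow> real) set" where
  "set_plus_CX A B = {(\<lambda>x. f x + g x) | f g. f \<in> A \<and> g \<in> B}"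

definition extremally_disconnected :: "'a topology \<Rightarrow> bool" where
  "extremally_disconnected X \<longleftrightarrow> (\<forall>U. openin X U \<longrightarrow> openin X (X closure_of U))"

end

theory Submission
  imports Defs
begin

text \<open>
  Every subset A of C(X) has an open \<^emph>\<open>support\<close>, the union of the
  cozero sets of its members; two ideals with A \<inter> B = (0) have disjoint supports,
  because f g \<in> A \<inter> B for f \<in> A, g \<in> B.

  (2) \<Longrightarrow> (1): in an extremally disconnected space the closure C of the support of A
  is clopen and misses the support of B.  Splitting any h \<in> C(X) as
  h = h\<cdot>1_(X-C) + h\<cdot>1_C writes h as an element of Ann(A) plus one of Ann(B).

  (1) \<Longrightarrow> (2): for open U put V = X - cl U, and let I(U), I(V) be the ideals of
  functions vanishing outside U resp. V; they meet only in 0.  Complete regularity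
  gives bump functions, so members of Ann(I(U)) vanish on U.  Writing 1 = a + b
  with a \<in> Ann(I(U)), b \<in> Ann(I(V)) we get b = 1 on cl U and b = 0 on V, hence
  cl U is the cozero set of b, an open set.
\<close>

lemma CX_mult: "f \<in> CX X \<Longrightarrow> g \<in> CX X \<Longrightarrow> (\<lambda>x. f x * g x) \<in> CX X"
  unfolding CX_def mem_Collect_eq
  by (intro conjI continuous_map_real_mult; simp)

lemma CX_add: "f \<in> CX X \<Longrightarrow> g \<in> CX X \<Longrightarrow> (\<lambda>x. f x + g x) \<in> CX X"
  unfolding CX_def mem_Collect_eq
  by (intro conjI continuous_map_add; simp)

lemma CX_diff: "f \<in> CX X \<Longrightarrow> g \<in> CX X \<Longrightarrow> (\<lambda>x. f x - g x) \<in> CX X"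
  unfolding CX_def mem_Collect_eq
  by (intro conjI continuous_map_diff; simp)

lemma clopen_indicator_CX:
  assumes "closedin X C" "openin X C"
  shows "(\<lambda>x. if x \<in> C then 1 else 0 :: real) \<in> CX X"
proof -
  have CS: "C \<subseteq> topspace X" using assms(2) openin_subset by auto
  have co: "openin X (topspace X - C)" using assms(1) by (simp add: openin_diff)
  have "continuous_map X euclideanreal (\<lambda>x. if x \<in> C then 1 else 0 :: real)"
    unfolding continuous_map_def
  proof (intro conjI allI impI)
    fix T :: "real set"
    have "{x \<in> topspace X. (if x \<in> C then 1 else 0) \<in> T} =
          (if 1 \<in> T then C else {}) \<union> (if 0 \<in> T then topspace X - C else {})"
      by (cases "1 \<in> T"; cases "0 \<in> T") (use CS in auto)
    then show "openin X {x \<in> topspace X. (if x \<in> C then 1 else 0) \<in> T}"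
      by (simp add: assms(2) co openin_Un)
  qed simp
  then show ?thesis using CS by (auto simp: CX_def)
qed

lemma cozero_open: "f \<in> CX X \<Longrightarrow> openin X {x \<in> topspace X. f x \<noteq> 0}"
  using openin_continuous_map_preimage[of X euclideanreal f "- {0}"]
  by (simp add: CX_def open_Compl)

lemma bump_function:
  assumes cr: "completely_regular_space X" and U: "openin X U" and x: "x \<in> U"
  obtains h where "h \<in> CX X" "h x = 1" "\<And>y. y \<notin> U \<Longrightarrow> h y = 0"
proof -
  obtain f where fc: "continuous_map X euclideanreal f" and f: "f x = 0"
      "f ` (topspace X - U) \<subseteq> {1}"
    using cr[unfolded completely_regular_space_alt', rule_format, OF U x] by blast
  define h where "h = (\<lambda>y. if y \<in> topspace X then 1 - f y else 0)"
  have "continuous_map X euclideanreal (\<lambda>y. 1 - f y)"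
    by (intro continuous_intros fc)
  then have "continuous_map X euclideanreal h"
    by (rule continuous_map_eq) (simp add: h_def)
  then have "h \<in> CX X" by (simp add: CX_def h_def)
  moreover have "h x = 1" using f(1) x openin_subset[OF U] by (auto simp: h_def)
  moreover have "h y = 0" if "y \<notin> U" for y using f(2) that by (auto simp: h_def)
  ultimately show ?thesis using that by blast
qed

definition support_CX :: "'a topology \<Rightarrow> ('a \<Rightarrow> real) set \<Rightarrow> 'a set" where
  "support_CX X A = (\<Union>f\<in>A. {x \<in> topspace X. f x \<noteq> 0})"

lemma support_CX_open: "A \<subseteq> CX X \<Longrightarrow> openin X (support_CX X A)"
  unfolding support_CX_def using cozero_open by (intro openin_Union) blast

text \<open>Outside its support every member of A vanishes (also off topspace X,
  by the normalisation built into C(X)).\<close>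
lemma vanishes_off_support:
  assumes "A \<subseteq> CX X" "f \<in> A" "x \<notin> support_CX X A"
  shows "f x = 0"
  using assms by (auto simp: support_CX_def CX_def)

lemma disjoint_ideals_product_zero:
  assumes A: "ideal_CX X A" and B: "ideal_CX X B" and AB: "A \<inter> B = {\<lambda>x. 0}"
    and f: "f \<in> A" and g: "g \<in> B"
  shows "f x * g x = 0"
proof -
  have "f \<in> CX X" "g \<in> CX X" using A B f g by (auto simp: ideal_CX_def)
  then have "(\<lambda>x. g x * f x) \<in> A" "(\<lambda>x. f x * g x) \<in> B"
    using A B f g unfolding ideal_CX_def by blast+
  then have "(\<lambda>x. f x * g x) \<in> A \<inter> B" by (simp add: mult.commute)
  then show ?thesis using AB by (metis singletonD)
qed

lemma disjoint_ideals_supports_disjoint: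
  assumes "ideal_CX X A" "ideal_CX X B" "A \<inter> B = {\<lambda>x. 0}"
  shows "support_CX X A \<inter> support_CX X B = {}"
  using disjoint_ideals_product_zero[OF assms] by (fastforce simp: support_CX_def)

text \<open>If a clopen set C contains the support of A and misses the support of B,
  then multiplying by the characteristic functions of X - C and of C splits
  every h \<in> C(X) into a part annihilating A and a part annihilating B.\<close>
lemma Ann_sum_from_clopen:
  assumes ACX: "A \<subseteq> CX X" and BCX: "B \<subseteq> CX X"
    and cC: "closedin X C" and oC: "openin X C"
    and AC: "support_CX X A \<subseteq> C" and BC: "support_CX X B \<inter> C = {}"
  shows "set_plus_CX (Ann X A) (Ann X B) = CX X"
proof
  show "set_plus_CX (Ann X A) (Ann X B) \<subseteq> CX X"
    by (auto simp: set_plus_CX_def Ann_def CX_add)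
next
  define e where "e = (\<lambda>x. if x \<in> C then 1 else 0 :: real)"
  define e' where "e' = (\<lambda>x. if x \<in> topspace X - C then 1 else 0 :: real)"
  have CS: "C \<subseteq> topspace X" using cC closedin_subset by auto
  have eC: "e \<in> CX X" unfolding e_def by (rule clopen_indicator_CX[OF cC oC])
  have eC': "e' \<in> CX X" unfolding e'_def
    by (rule clopen_indicator_CX) (simp_all add: openin_diff closedin_diff cC oC)
  show "CX X \<subseteq> set_plus_CX (Ann X A) (Ann X B)"
  proof
    fix h assume h: "h \<in> CX X"
    have "(\<lambda>x. h x * e' x) \<in> Ann X A"
    proof -
      have "h x * e' x * f x = 0" if "f \<in> A" for f x
        using vanishes_off_support[OF ACX that, of x] AC by (auto simp: e'_def)
      then show ?thesis by (auto simp: Ann_def CX_mult h eC')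
    qed
    moreover have "(\<lambda>x. h x * e x) \<in> Ann X B"
    proof -
      have "h x * e x * g x = 0" if "g \<in> B" for g x
        using vanishes_off_support[OF BCX that, of x] BC by (auto simp: e_def)
      then show ?thesis by (auto simp: Ann_def CX_mult h eC)
    qed
    moreover have "h = (\<lambda>x. h x * e' x + h x * e x)"
      using h CS by (auto simp: e_def e'_def CX_def)
    ultimately show "h \<in> set_plus_CX (Ann X A) (Ann X B)"
      unfolding set_plus_CX_def by (intro CollectI exI conjI)
  qed
qed

lemma extremally_disconnected_Ann_sum:
  assumes ED: "extremally_disconnected X"
    and A: "ideal_CX X A" and B: "ideal_CX X B" and AB: "A \<inter> B = {\<lambda>x. 0}"
  shows "set_plus_CX (Ann X A) (Ann X B) = CX X"
proof -
  have ACX: "A \<subseteq> CX X" and BCX: "B \<subseteq> CX X" using A B by (auto simp: ideal_CX_def)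
  let ?U = "support_CX X A" and ?V = "support_CX X B"
  have oU: "openin X ?U" and oV: "openin X ?V"
    using ACX BCX by (simp_all add: support_CX_open)
  have "?U \<subseteq> topspace X - ?V"
    using disjoint_ideals_supports_disjoint[OF A B AB] openin_subset[OF oU] by blast
  then have "X closure_of ?U \<subseteq> topspace X - ?V"
    using oV by (simp add: closure_of_minimal closedin_diff)
  then show ?thesis
    using ED oU
    by (intro Ann_sum_from_clopen[OF ACX BCX, of "X closure_of ?U"])
       (auto simp: extremally_disconnected_def closure_of_subset openin_subset)
qed

definition vanish_outside :: "'a topology \<Rightarrow> 'a set \<Rightarrow> ('a \<Rightarrow> real) set" where
  "vanish_outside X U = {f \<in> CX X. \<forall>x. x \<notin> U \<longrightarrow> f x = 0}"

lemma vanish_outside_ideal: "ideal_CX X (vanish_outside X U)"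
  unfolding ideal_CX_def vanish_outside_def
  by (auto simp: CX_mult CX_diff) (simp add: CX_def)

lemma vanish_outside_disjoint:
  "U \<inter> V = {} \<Longrightarrow> vanish_outside X U \<inter> vanish_outside X V = {\<lambda>x. 0}"
proof
  assume "U \<inter> V = {}"
  then show "vanish_outside X U \<inter> vanish_outside X V \<subseteq> {\<lambda>x. 0}"
    by (auto simp: vanish_outside_def)
  show "{\<lambda>x. 0} \<subseteq> vanish_outside X U \<inter> vanish_outside X V"
    using vanish_outside_ideal unfolding ideal_CX_def by blast
qed

text \<open>By complete regularity, an annihilator of the functions vanishing outside
  an open set U is itself zero on U.\<close>
lemma Ann_vanish_outside_zero:
  assumes cr: "completely_regular_space X" and U: "openin X U"
    and a: "a \<in> Ann X (vanish_outside X U)" and x: "x \<in> U"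
  shows "a x = 0"
proof -
  obtain h where h: "h \<in> CX X" "h x = 1" "\<And>y. y \<notin> U \<Longrightarrow> h y = 0"
    using bump_function[OF cr U x] by blast
  then have "h \<in> vanish_outside X U" by (simp add: vanish_outside_def)
  then have "(\<lambda>y. a y * h y) = (\<lambda>y. 0)" using a by (auto simp: Ann_def)
  then have "a x * h x = 0" by (rule fun_cong)
  then show ?thesis using h(2) by simp
qed

text \<open>If 1 = a + b on X with a zero on the open set U and b zero on
  V = X - cl U, then b is 1 on cl U and cl U is the cozero set of b.\<close>
lemma closure_open_from_partition:
  assumes U: "openin X U" and b: "b \<in> CX X"
    and sum: "\<And>x. x \<in> topspace X \<Longrightarrow> a x + b x = 1"
    and a0: "\<And>x. x \<in> U \<Longrightarrow> a x = 0"
    and b0: "\<And>x. x \<in> topspace X - X closure_of U \<Longrightarrow> b x = 0"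
  shows "openin X (X closure_of U)"
proof -
  have bc: "continuous_map X euclideanreal b" using b by (simp add: CX_def)
  have "closedin X {x \<in> topspace X. b x \<in> {1}}"
    by (rule closedin_continuous_map_preimage[OF bc]) simp
  moreover have "U \<subseteq> {x \<in> topspace X. b x \<in> {1}}"
    using openin_subset[OF U] a0 sum by fastforce
  ultimately have "X closure_of U \<subseteq> {x \<in> topspace X. b x \<in> {1}}"
    by (simp add: closure_of_minimal)
  then have "X closure_of U = {x \<in> topspace X. b x \<noteq> 0}"
    using b0 closure_of_subset_topspace[of X U] by fastforce
  then show ?thesis using cozero_open[OF b] by simp
qed

lemma Ann_sum_extremally_disconnected:
  assumes cr: "completely_regular_space X"
    and H: "\<forall>A B. ideal_CX X A \<and> ideal_CX X B \<and> A \<inter> B = {\<lambda>x. 0}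
              \<longrightarrow> set_plus_CX (Ann X A) (Ann X B) = CX X"
  shows "extremally_disconnected X"
  unfolding extremally_disconnected_def
proof (intro allI impI)
  fix U assume U: "openin X U"
  define V where "V = topspace X - X closure_of U"
  have V: "openin X V" unfolding V_def by (simp add: openin_diff)
  have "U \<inter> V = {}"
    using closure_of_subset[OF openin_subset[OF U]] by (auto simp: V_def)
  then have eq: "set_plus_CX (Ann X (vanish_outside X U)) (Ann X (vanish_outside X V)) = CX X"
    using H vanish_outside_ideal vanish_outside_disjoint by blast
  define one where "one = (\<lambda>x. if x \<in> topspace X then 1 else 0 :: real)"
  have "one \<in> CX X"
    unfolding one_def by (rule clopen_indicator_CX) simp_all
  then obtain a b where ab: "one = (\<lambda>x. a x + b x)"
      and a: "a \<in> Ann X (vanish_outside X U)" and b: "b \<in> Ann X (vanish_outside X V)"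
    using eq unfolding set_plus_CX_def by blast
  show "openin X (X closure_of U)"
  proof (rule closure_open_from_partition[OF U, of b a])
    show "b \<in> CX X" using b by (simp add: Ann_def)
    show "a x + b x = 1" if "x \<in> topspace X" for x
      using fun_cong[OF ab, of x] that by (simp add: one_def)
    show "a x = 0" if "x \<in> U" for x using Ann_vanish_outside_zero[OF cr U a that] .
    show "b x = 0" if "x \<in> topspace X - X closure_of U" for x
      using Ann_vanish_outside_zero[OF cr V b] that by (simp add: V_def)
  qed
qed

theorem theorem2p5:
  fixes X :: "'a topology"
  assumes "completely_regular_space X" and "Hausdorff_space X"
  shows "(\<forall>A B. ideal_CX X A \<and> ideal_CX X B \<and> A \<inter> B = {\<lambda>x. 0}
            \<longrightarrow> set_plus_CX (Ann X A) (Ann X B) = CX X)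
         \<longleftrightarrow> extremally_disconnected X"
  using Ann_sum_extremally_disconnected[OF assms(1)] extremally_disconnected_Ann_sum
  by blast

end
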